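(* Let $S$ be a $d$-dimensional quantum system ($d<\infty$) with Hamiltonian $H_S=\sum_{i=0}^{d-1}E_S^{(i)}|i\rangle\langle i|$, $0=E_S^{(0)}\le E_S^{(1)}\le\dots$, initially in the thermal state $\tau_S(\beta,H_S)$, and let $\lambda>1$. For $N\in\mathbb{N}$, consider $N$ machines $M_1,\dots,M_N$, each a $d$-dimensional system with an arbitrary (freely chosen) Hamiltonian $H_{M_n}$, each initially in the thermal state $\tau(\beta,H_{M_n})$ at the same inverse temperature $\beta$, and uncorrelated with each other and with $S$. The cooling is implemented by the global unitary $U=\mathbb{S}_N\cdots\mathbb{S}_2\mathbb{S}_1$, where $\mathbb{S}_n$ swaps the state of $S$ with that of $M_n$ (in their energy eigenbases ordered by non-decreasing energy), and the machine Hamiltonians are chosen such that the final state of $S$ is $\tau_S(\lambda\beta,H_S)$. Then the minimum, over all such choices of machine Hamiltonians $\{H_{M_n}\}_{n=1}^N$, of the (scaled) energy cost satisfies $$\beta\,\Delta E_M=\widetilde{\Delta}S_S+\frac{1}{2N}(\mathcal{L}^* )^2+\mathcal{O}(N^{-2})\quad (N\to\infty),$$ where $$\mathcal{L}^*=2\arccos\Big(\mathrm{tr}\Big[\sqrt{\tau_S(\beta,H_S)}\sqrt{\tau_S(\lambda\beta,H_S)}\Big]\Big)=2\arccos\left(\frac{\mathcal{Z}(\beta(1+\lambda)/2)}{\sqrt{\mathcal{Z}(\beta)\mathcal{Z}(\lambda\beta)}}\right).$$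
   Context: For a Hamiltonian $H$, the thermal (Gibbs) state at inverse temperature $\beta$ is $\tau(\beta,H)=e^{-\beta H}/\mathcal{Z}(\beta)$ with partition function $\mathcal{Z}(\beta)=\mathrm{tr}[e^{-\beta H}]$; in the formula for $\mathcal{L}^*$, $\mathcal{Z}$ is the partition function of $H_S$. The von Neumann entropy is $S(\varrho)=-\mathrm{tr}[\varrho\log\varrho]$, and $\widetilde{\Delta}S_S:=S(\tau_S(\beta,H_S))-S(\tau_S(\lambda\beta,H_S))$ is the entropy decrease of the target. With $H_M=\sum_n H_{M_n}$ (each acting on its own factor) and $\varrho_M,\varrho'_M$ the initial and final joint machine states, $\Delta E_M:=\mathrm{tr}[H_M(\varrho'_M-\varrho_M)]$ is the heat dissipated into the machines. The constants in $\mathcal{O}(N^{-2})$ depend on $H_S,\beta,\lambda$ but not on $N$. *)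

theory Defs
  imports Complex_Main "HOL-Library.FuncSet" "HOL-Library.Landau_Symbols"
begin

text \<open>All Hamiltonians are represented by their spectra, labelled in their energy
  eigenbases (indices 0..d-1). All states occurring in the protocol are diagonal in the
  product energy eigenbasis, so a (joint) state is represented by its diagonal, i.e. a
  function on basis configurations.\<close>

definition sorted_spec :: "nat \<Rightarrow> (nat \<Rightarrow> real) \<Rightarrow> bool" where
  "sorted_spec d E = (\<forall>i j. i \<le> j \<longrightarrow> j < d \<longrightarrow> E i \<le> E j)"

definition partition_fn :: "nat \<Rightarrow> (nat \<Rightarrow> real) \<Rightarrow> real \<Rightarrow> real" where
  "partition_fn d E b = (\<Sum>j<d. exp (- b * E j))"

definition thermal :: "nat \<Rightarrow> real \<Rightarrow> (nat \<Rightarrow> real) \<Rightarrow> nat \<Rightarrow> real" where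
  "thermal d b E i = exp (- b * E i) / partition_fn d E b"

definition entropy :: "nat \<Rightarrow> (nat \<Rightarrow> real) \<Rightarrow> real" where
  "entropy d p = - (\<Sum>i<d. p i * ln (p i))"

text \<open>Basis configurations of S (index 0) and machines M_1..M_N (indices 1..N).\<close>
definition confs :: "nat \<Rightarrow> nat \<Rightarrow> (nat \<Rightarrow> nat) set" where
  "confs d N = {0..N} \<rightarrow>\<^sub>E {..<d}"

definition swap_conf :: "nat \<Rightarrow> (nat \<Rightarrow> nat) \<Rightarrow> (nat \<Rightarrow> nat)" where
  "swap_conf n c = c(0 := c n, n := c 0)"

text \<open>Initial uncorrelated product of thermal states; EM n is the spectrum of H_{M_n}.\<close>
definition initial_state ::
  "nat \<Rightarrow> real \<Rightarrow> (nat \<Rightarrow> real) \<Rightarrow> (nat \<Rightarrow> nat \<Rightarrow> real) \<Rightarrow> nat \<Rightarrow> (nat \<Rightarrow> nat) \<Rightarrow> real" where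
  "initial_state d b ES EM N c =
     (\<Prod>k\<in>{0..N}. thermal d b (if k = 0 then ES else EM k) (c k))"

text \<open>Applying S_n ... S_1 (S_1 first): the diagonal of U rho U^dagger.\<close>
primrec evolve :: "nat \<Rightarrow> ((nat \<Rightarrow> nat) \<Rightarrow> real) \<Rightarrow> (nat \<Rightarrow> nat) \<Rightarrow> real" where
  "evolve 0 P = P"
| "evolve (Suc n) P = (\<lambda>c. evolve n P (swap_conf (Suc n) c))"

definition final_state ::
  "nat \<Rightarrow> real \<Rightarrow> (nat \<Rightarrow> real) \<Rightarrow> (nat \<Rightarrow> nat \<Rightarrow> real) \<Rightarrow> nat \<Rightarrow> (nat \<Rightarrow> nat) \<Rightarrow> real" where
  "final_state d b ES EM N = evolve N (initial_state d b ES EM N)"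

definition energy_M :: "nat \<Rightarrow> (nat \<Rightarrow> nat \<Rightarrow> real) \<Rightarrow> (nat \<Rightarrow> nat) \<Rightarrow> real" where
  "energy_M N EM c = (\<Sum>n\<in>{1..N}. EM n (c n))"

definition Delta_E_M ::
  "nat \<Rightarrow> real \<Rightarrow> (nat \<Rightarrow> real) \<Rightarrow> (nat \<Rightarrow> nat \<Rightarrow> real) \<Rightarrow> nat \<Rightarrow> real" where
  "Delta_E_M d b ES EM N =
     (\<Sum>c\<in>confs d N. energy_M N EM c * (final_state d b ES EM N c - initial_state d b ES EM N c))"

text \<open>Eigenvalues of the final reduced state of S (diagonal of the partial trace).\<close>
definition final_S_pop ::
  "nat \<Rightarrow> real \<Rightarrow> (nat \<Rightarrow> real) \<Rightarrow> (nat \<Rightarrow> nat \<Rightarrow> real) \<Rightarrow> nat \<Rightarrow> nat \<Rightarrow> real" where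
  "final_S_pop d b ES EM N i = (\<Sum>c\<in>{c\<in>confs d N. c 0 = i}. final_state d b ES EM N c)"

definition admissible ::
  "nat \<Rightarrow> real \<Rightarrow> real \<Rightarrow> (nat \<Rightarrow> real) \<Rightarrow> nat \<Rightarrow> (nat \<Rightarrow> nat \<Rightarrow> real) \<Rightarrow> bool" where
  "admissible d b lam ES N EM =
     ((\<forall>n\<in>{1..N}. sorted_spec d (EM n)) \<and>
      (\<forall>i<d. final_S_pop d b ES EM N i = thermal d (lam * b) ES i))"

definition min_cost :: "nat \<Rightarrow> real \<Rightarrow> real \<Rightarrow> (nat \<Rightarrow> real) \<Rightarrow> nat \<Rightarrow> real" where
  "min_cost d b lam ES N =
     Inf {b * Delta_E_M d b ES EM N | EM. admissible d b lam ES N EM}"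

text \<open>L* = 2 arccos tr[sqrt tau_S(b) sqrt tau_S(lam b)] for the commuting diagonal states.\<close>
definition Lstar :: "nat \<Rightarrow> real \<Rightarrow> real \<Rightarrow> (nat \<Rightarrow> real) \<Rightarrow> real" where
  "Lstar d b lam ES =
     2 * arccos (\<Sum>i<d. sqrt (thermal d b ES i) * sqrt (thermal d (lam * b) ES i))"

end

theory Submission
  imports Defs
begin

(*
  Each swap hands S the thermal state of the next machine. Hence, writing tau_0 = tau_S(beta)
  and tau_n for the Gibbs state of M_n, the scaled cost beta Delta E_M is the entropy decrease
  of S plus sum_n D(tau_{n-1} || tau_n), and the only constraint is tau_N = tau_S(lam beta).
  The square roots of the populations are unit vectors with positive entries, and a step
  costs D ~ 2 (1 - cos h_n) for the angle h_n between neighbours. Since these angles add up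
  to at least the Bures angle theta = L*/2, the total is about 2 theta^2 / N at best, and
  N equal steps along the great circle from sqrt tau_S(beta) to sqrt tau_S(lam beta) attain
  this up to O(N^-2). For the matching lower bound, every relative entropy is replaced by its
  variational bound with trial weights taken from the great circle chain; the three-term
  recurrence X_{n-1} + X_{n+1} = 2 cos h X_n of that chain makes the bound telescope.
*)

section \<open>The swap protocol\<close>

definition cycle_conf :: "nat \<Rightarrow> (nat \<Rightarrow> nat) \<Rightarrow> nat \<Rightarrow> nat" where
  "cycle_conf n c = (\<lambda>k. if k = 0 then (if n = 0 then c 0 else c 1)
                          else if k < n then c (k + 1) else if k = n then c 0 else c k)"

lemma evolve_eq_cycle_conf: "evolve n P c = P (cycle_conf n c)"
proof (induction n arbitrary: c)
  case 0
  have "cycle_conf 0 c = c" by (auto simp: cycle_conf_def fun_eq_iff)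
  then show ?case by simp
next
  case (Suc n)
  have "cycle_conf n (swap_conf (Suc n) c) = cycle_conf (Suc n) c"
    by (auto simp: cycle_conf_def swap_conf_def fun_eq_iff less_Suc_eq)
  then show ?case using Suc by simp
qed

lemma sum_PiE_mult_prod_marginal:
  fixes f :: "'i \<Rightarrow> 'a \<Rightarrow> 'b::comm_ring_1"
  assumes "finite I" "j \<in> I" "finite A" "\<And>k. k \<in> I \<Longrightarrow> (\<Sum>x\<in>A. f k x) = 1"
  shows "(\<Sum>c\<in>PiE I (\<lambda>_. A). g (c j) * (\<Prod>k\<in>I. f k (c k))) = (\<Sum>x\<in>A. g x * f j x)"
proof -
  define f' where "f' k x = (if k = j then g x * f k x else f k x)" for k x
  have prod_f': "(\<Prod>k\<in>I. f' k (c k)) = g (c j) * (\<Prod>k\<in>I. f k (c k))" for c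
  proof -
    have "(\<Prod>k\<in>I - {j}. f' k (c k)) = (\<Prod>k\<in>I - {j}. f k (c k))"
      by (intro prod.cong) (auto simp: f'_def)
    then show ?thesis
      by (simp only: prod.remove[OF assms(1,2)]) (simp add: f'_def mult.assoc)
  qed
  have "(\<Sum>c\<in>PiE I (\<lambda>_. A). \<Prod>k\<in>I. f' k (c k)) = (\<Prod>k\<in>I. \<Sum>x\<in>A. f' k x)"
    by (rule prod_sum_PiE[symmetric]) (use assms in auto)
  also have "\<dots> = (\<Sum>x\<in>A. f' j x) * (\<Prod>k\<in>I - {j}. \<Sum>x\<in>A. f' k x)"
    using assms(1,2) by (simp add: prod.remove)
  also have "(\<Prod>k\<in>I - {j}. \<Sum>x\<in>A. f' k x) = 1"
    using assms(4) by (intro prod.neutral) (auto simp: f'_def)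
  finally show ?thesis unfolding prod_f' by (simp add: f'_def)
qed

lemma partition_fn_pos: "d \<ge> 1 \<Longrightarrow> partition_fn d E b > 0"
  unfolding partition_fn_def by (intro sum_pos) (auto simp: lessThan_empty_iff)

lemma thermal_pos: "d \<ge> 1 \<Longrightarrow> thermal d b E i > 0"
  unfolding thermal_def using partition_fn_pos[of d E b] by simp

lemma sum_thermal: "d \<ge> 1 \<Longrightarrow> (\<Sum>i<d. thermal d b E i) = 1"
  unfolding thermal_def using partition_fn_pos[of d E b]
  by (simp add: sum_divide_distrib[symmetric] partition_fn_def)

lemma ln_thermal: "d \<ge> 1 \<Longrightarrow> ln (thermal d b E i) = - b * E i - ln (partition_fn d E b)"
  unfolding thermal_def using partition_fn_pos[of d E b] by (simp add: ln_div)

lemma thermal_antimono: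
  assumes "d \<ge> 1" "b \<ge> 0" "sorted_spec d E" "i \<le> j" "j < d"
  shows "thermal d b E j \<le> thermal d b E i"
proof -
  have "exp (- b * E j) \<le> exp (- b * E i)"
    using assms unfolding sorted_spec_def by (simp add: mult_left_mono)
  then show ?thesis
    unfolding thermal_def using partition_fn_pos[OF assms(1), of E b]
    by (intro divide_right_mono) simp_all
qed

lemma thermal_of_ln_sq:
  assumes "d \<ge> 1" "b > 0" "\<forall>i<d. x i > 0" "(\<Sum>i<d. (x i)^2) = 1" "i < d"
  shows "thermal d b (\<lambda>i. - ln ((x i)^2) / b) i = (x i)^2"
proof -
  have exp_eq: "exp (- b * (- ln ((x j)^2) / b)) = (x j)^2" if "j < d" for j
  proof -
    have "x j > 0" using assms(3) that by blast
    then show ?thesis using assms(2) by simp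
  qed
  then have "partition_fn d (\<lambda>i. - ln ((x i)^2) / b) b = 1"
    using assms(4) by (simp add: partition_fn_def)
  then show ?thesis unfolding thermal_def using exp_eq[OF assms(5)] by simp
qed

text \<open>After the swaps, S carries the state of M_N and each M_n carries the state that
  M_{n-1} (for n = 1: the system S) started in.\<close>
definition final_spectrum ::
  "(nat \<Rightarrow> real) \<Rightarrow> (nat \<Rightarrow> nat \<Rightarrow> real) \<Rightarrow> nat \<Rightarrow> nat \<Rightarrow> nat \<Rightarrow> real" where
  "final_spectrum ES EM N k = (if k = 0 then EM N else if k = 1 then ES else EM (k - 1))"

lemma final_state_eq_prod:
  assumes "N \<ge> 1"
  shows "final_state d b ES EM N c = (\<Prod>k\<in>{0..N}. thermal d b (final_spectrum ES EM N k) (c k))"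
proof -
  define \<sigma> where "\<sigma> k = (if k = N then 0 else k + 1)" for k :: nat
  have bij: "bij_betw \<sigma> {0..N} {0..N}"
    by (rule bij_betw_byWitness[where f' = "\<lambda>k. if k = 0 then N else k - 1"])
       (use assms in \<open>auto simp: \<sigma>_def\<close>)
  have "final_state d b ES EM N c
      = (\<Prod>k\<in>{0..N}. thermal d b (if k = 0 then ES else EM k) (cycle_conf N c k))"
    by (simp add: final_state_def evolve_eq_cycle_conf initial_state_def)
  also have "\<dots> = (\<Prod>k\<in>{0..N}. (\<lambda>k. thermal d b (final_spectrum ES EM N k) (c k)) (\<sigma> k))"
    by (intro prod.cong refl) (use assms in \<open>auto simp: cycle_conf_def final_spectrum_def \<sigma>_def\<close>)
  also have "\<dots> = (\<Prod>k\<in>{0..N}. thermal d b (final_spectrum ES EM N k) (c k))"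
    by (rule prod.reindex_bij_betw[OF bij])
  finally show ?thesis .
qed

lemma sum_energy_M_mult_thermal_prod:
  assumes "d \<ge> 1"
  shows "(\<Sum>c\<in>confs d N. energy_M N EM c * (\<Prod>k\<in>{0..N}. thermal d b (E k) (c k)))
       = (\<Sum>n\<in>{1..N}. \<Sum>i<d. EM n i * thermal d b (E n) i)"
proof -
  have "(\<Sum>c\<in>confs d N. energy_M N EM c * (\<Prod>k\<in>{0..N}. thermal d b (E k) (c k)))
      = (\<Sum>n\<in>{1..N}. \<Sum>c\<in>confs d N. EM n (c n) * (\<Prod>k\<in>{0..N}. thermal d b (E k) (c k)))"
    by (simp add: energy_M_def sum_distrib_right sum.swap[of _ "confs d N"])
  also have "\<dots> = (\<Sum>n\<in>{1..N}. \<Sum>i<d. EM n i * thermal d b (E n) i)"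
    unfolding confs_def
    by (intro sum.cong refl sum_PiE_mult_prod_marginal) (use assms sum_thermal in auto)
  finally show ?thesis .
qed

lemma Delta_E_M_eq:
  assumes "d \<ge> 1" "N \<ge> 1"
  shows "Delta_E_M d b ES EM N = (\<Sum>n\<in>{1..N}. \<Sum>i<d. EM n i *
            (thermal d b (if n = 1 then ES else EM (n - 1)) i - thermal d b (EM n) i))"
proof -
  have "Delta_E_M d b ES EM N
      = (\<Sum>c\<in>confs d N. energy_M N EM c * final_state d b ES EM N c)
      - (\<Sum>c\<in>confs d N. energy_M N EM c * initial_state d b ES EM N c)"
    by (simp add: Delta_E_M_def algebra_simps sum_subtractf)
  also have "\<dots> = (\<Sum>n\<in>{1..N}. \<Sum>i<d. EM n i * thermal d b (final_spectrum ES EM N n) i)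
      - (\<Sum>n\<in>{1..N}. \<Sum>i<d. EM n i * thermal d b (if n = 0 then ES else EM n) i)"
    using assms by (simp add: final_state_eq_prod initial_state_def sum_energy_M_mult_thermal_prod)
  finally show ?thesis
    by (simp add: sum_subtractf[symmetric] algebra_simps final_spectrum_def)
qed

lemma finite_confs: "finite (confs d N)"
  by (simp add: confs_def finite_PiE)

lemma final_S_pop_eq:
  assumes "d \<ge> 1" "N \<ge> 1" "i < d"
  shows "final_S_pop d b ES EM N i = thermal d b (EM N) i"
proof -
  have "final_S_pop d b ES EM N i
      = (\<Sum>c\<in>confs d N. of_bool (c 0 = i) * final_state d b ES EM N c)"
    unfolding final_S_pop_def sum.inter_filter[OF finite_confs] by (intro sum.cong) auto
  also have "\<dots> = (\<Sum>c\<in>confs d N. of_bool (c 0 = i)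
                     * (\<Prod>k\<in>{0..N}. thermal d b (final_spectrum ES EM N k) (c k)))"
    using assms by (simp add: final_state_eq_prod)
  also have "\<dots> = (\<Sum>x<d. of_bool (x = i) * thermal d b (final_spectrum ES EM N 0) x)"
    unfolding confs_def by (rule sum_PiE_mult_prod_marginal) (use assms sum_thermal in auto)
  also have "\<dots> = thermal d b (EM N) i"
    using assms by (simp add: final_spectrum_def)
  finally show ?thesis .
qed

section \<open>Energy cost as entropy decrease plus relative entropies\<close>

definition rel_entropy :: "nat \<Rightarrow> (nat \<Rightarrow> real) \<Rightarrow> (nat \<Rightarrow> real) \<Rightarrow> real" where
  "rel_entropy d p q = (\<Sum>i<d. p i * (ln (p i) - ln (q i)))"

lemma rel_entropy_cong:
  "(\<And>i. i < d \<Longrightarrow> p i = p' i) \<Longrightarrow> (\<And>i. i < d \<Longrightarrow> q i = q' i)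
    \<Longrightarrow> rel_entropy d p q = rel_entropy d p' q'"
  unfolding rel_entropy_def by (intro sum.cong) auto

lemma entropy_cong: "(\<And>i. i < d \<Longrightarrow> p i = p' i) \<Longrightarrow> entropy d p = entropy d p'"
  unfolding entropy_def by (intro arg_cong[where f = uminus] sum.cong) auto

lemma scaled_heat_eq_rel_entropy:
  assumes "d \<ge> 1" "(\<Sum>i<d. p i) = 1"
  shows "b * (\<Sum>i<d. E i * (p i - thermal d b E i))
       = rel_entropy d p (thermal d b E) + entropy d p - entropy d (thermal d b E)"
proof -
  let ?q = "thermal d b E" and ?lnZ = "ln (partition_fn d E b)"
  have "b * (\<Sum>i<d. E i * (p i - ?q i)) = (\<Sum>i<d. (- ln (?q i) - ?lnZ) * (p i - ?q i))"
    by (simp add: sum_distrib_left ln_thermal[OF assms(1)] algebra_simps)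
  also have "\<dots> = (\<Sum>i<d. - ln (?q i) * (p i - ?q i)) - ?lnZ * ((\<Sum>i<d. p i) - (\<Sum>i<d. ?q i))"
    by (simp add: algebra_simps sum_subtractf sum_distrib_left sum_distrib_right sum.distrib)
  also have "(\<Sum>i<d. p i) - (\<Sum>i<d. ?q i) = 0"
    using assms sum_thermal by simp
  finally show ?thesis
    by (simp add: rel_entropy_def entropy_def algebra_simps sum_subtractf sum_distrib_left)
qed

text \<open>The n-th swap moves S from state n to state n + 1 of this chain of initial states.\<close>
definition thermal_chain ::
  "nat \<Rightarrow> real \<Rightarrow> (nat \<Rightarrow> real) \<Rightarrow> (nat \<Rightarrow> nat \<Rightarrow> real) \<Rightarrow> nat \<Rightarrow> nat \<Rightarrow> real" where
  "thermal_chain d b ES EM n = thermal d b (if n = 0 then ES else EM n)"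

lemma scaled_Delta_E_M_eq:
  fixes b :: real and ES :: "nat \<Rightarrow> real" and EM :: "nat \<Rightarrow> nat \<Rightarrow> real"
  assumes "d \<ge> 1" "N \<ge> 1"
  defines "Q \<equiv> thermal_chain d b ES EM"
  shows "b * Delta_E_M d b ES EM N
       = entropy d (Q 0) - entropy d (Q N) + (\<Sum>n<N. rel_entropy d (Q n) (Q (Suc n)))"
proof -
  have "b * Delta_E_M d b ES EM N
      = (\<Sum>n<N. b * (\<Sum>i<d. EM (Suc n) i * (Q n i - thermal d b (EM (Suc n)) i)))"
    unfolding Delta_E_M_eq[OF assms(1,2)] One_nat_def sum.atLeast1_atMost_eq sum_distrib_left
    by (intro sum.cong refl) (simp add: Q_def thermal_chain_def)
  also have "\<dots> = (\<Sum>n<N. rel_entropy d (Q n) (Q (Suc n)) + (entropy d (Q n) - entropy d (Q (Suc n))))"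
    by (intro sum.cong refl, subst scaled_heat_eq_rel_entropy)
       (use assms sum_thermal in \<open>auto simp: thermal_chain_def\<close>)
  also have "\<dots> = (\<Sum>n<N. rel_entropy d (Q n) (Q (Suc n))) + (entropy d (Q 0) - entropy d (Q N))"
    by (simp add: sum.distrib sum_lessThan_telescope'[of "\<lambda>n. entropy d (Q n)"])
  finally show ?thesis by simp
qed

lemma admissible_thermal_chain_last:
  assumes "admissible d b lam ES N EM" "d \<ge> 1" "N \<ge> 1" "i < d"
  shows "thermal_chain d b ES EM N i = thermal d (lam * b) ES i"
  using assms final_S_pop_eq[of d N i b ES EM]
  by (simp add: thermal_chain_def admissible_def)

lemma scaled_Delta_E_M_admissible:
  fixes b :: real and ES :: "nat \<Rightarrow> real" and EM :: "nat \<Rightarrow> nat \<Rightarrow> real"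
  assumes "admissible d b lam ES N EM" "d \<ge> 1" "N \<ge> 1"
  defines "Q \<equiv> thermal_chain d b ES EM"
  shows "b * Delta_E_M d b ES EM N = entropy d (thermal d b ES) - entropy d (thermal d (lam * b) ES)
           + (\<Sum>n<N. rel_entropy d (Q n) (Q (Suc n)))"
proof -
  have "entropy d (Q N) = entropy d (thermal d (lam * b) ES)"
    using admissible_thermal_chain_last[OF assms(1-3)] by (intro entropy_cong) (simp add: Q_def)
  moreover have "Q 0 = thermal d b ES" by (simp add: Q_def thermal_chain_def)
  ultimately show ?thesis
    using scaled_Delta_E_M_eq[OF assms(2,3)] by (simp add: Q_def)
qed

lemma ln_le_cubic_taylor:
  fixes y :: real assumes "y > 0"
  shows "ln y \<le> (y-1) - (y-1)^2/2 + (y-1)^3/3"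
proof -
  define f where "f z = (z-1) - (z-1)^2/2 + (z-1)^3/3 - ln z" for z :: real
  have D: "DERIV f x :> (x-1)^3/x" if "x > 0" for x
  proof -
    have "DERIV f x :> 1 - (x-1) + (x-1)^2 - 1/x"
      unfolding f_def using that
      by (auto intro!: derivative_eq_intros simp: power2_eq_square field_simps)
    moreover have "1 - (x-1) + (x-1)^2 - 1/x = (x-1)^3/x"
      using that by (simp add: field_simps power2_eq_square power3_eq_cube)
    ultimately show ?thesis by simp
  qed
  have f1: "f 1 = 0" by (simp add: f_def)
  show ?thesis
  proof (cases "y \<ge> 1")
    case True
    have "f 1 \<le> f y"
    proof (rule DERIV_nonneg_imp_nondecreasing[of 1 y f, OF True])
      fix x :: real assume "1 \<le> x" "x \<le> y"
      then show "\<exists>z. DERIV f x :> z \<and> z \<ge> 0" using D[of x] by auto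
    qed
    then show ?thesis using f1 by (simp add: f_def)
  next
    case False
    have "f y \<ge> f 1"
    proof (rule DERIV_nonpos_imp_nonincreasing[of y 1 f])
      show "y \<le> 1" using False by simp
      fix x assume x: "y \<le> x" "x \<le> 1"
      then have "(x-1)^3 \<le> 0" by (simp add: power_le_zero_eq_numeral)
      then show "\<exists>z. DERIV f x :> z \<and> z \<le> 0" using D[of x] x assms
        by (intro exI[of _ "(x-1)^3/x"]) (auto simp: divide_nonpos_pos)
    qed
    then show ?thesis using f1 by (simp add: f_def)
  qed
qed

lemma one_minus_inverse_le_ln: "y > 0 \<Longrightarrow> 1 - 1/y \<le> ln (y::real)"
  using ln_le_minus_one[of "1/y"] by (simp add: ln_div)

lemma sum_mult_ln_ratio_nonneg:
  fixes x y :: "nat \<Rightarrow> real"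
  assumes "\<forall>i<d. x i > 0 \<and> y i > 0" "(\<Sum>i<d. x i) = (\<Sum>i<d. y i)"
  shows "(\<Sum>i<d. x i * ln (x i / y i)) \<ge> 0"
proof -
  have "x i - y i \<le> x i * ln (x i / y i)" if "i < d" for i
  proof -
    have pos: "x i > 0" "y i > 0" using assms(1) that by auto
    then have "x i - y i = x i * (1 - 1 / (x i / y i))" by (simp add: field_simps)
    also have "\<dots> \<le> x i * ln (x i / y i)"
      using pos by (intro mult_left_mono one_minus_inverse_le_ln) simp_all
    finally show ?thesis .
  qed
  then have "(\<Sum>i<d. x i - y i) \<le> (\<Sum>i<d. x i * ln (x i / y i))" by (intro sum_mono) auto
  then show ?thesis using assms(2) by (simp add: sum_subtractf)
qed

lemma one_minus_cos_le_half_sq: "1 - cos h \<le> (h::real)^2/2"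
proof -
  have "1 - cos h = 2 * (sin (h/2))^2"
    using cos_double_sin[of "h/2"] by simp
  also have "\<dots> \<le> 2 * (h/2)^2"
  proof -
    have "(sin (h/2))^2 \<le> (h/2)^2" using abs_le_square_iff abs_sin_x_le_abs_x by blast
    then show ?thesis by simp
  qed
  finally show ?thesis by (simp add: power2_eq_square)
qed

lemma one_minus_cos_ge_taylor:
  fixes h :: real
  assumes "0 \<le> h" "h \<le> 1"
  shows "h^2/2 - h^4/24 \<le> 1 - cos h"
proof -
  have "\<bar>sin (h/2) - (\<Sum>m<3. sin_coeff m * (h/2) ^ m)\<bar> \<le> inverse (fact 3) * \<bar>h/2\<bar> ^ 3"
    by (rule Maclaurin_sin_bound)
  then have "\<bar>sin (h/2) - h/2\<bar> \<le> (h/2)^3/6"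
    using assms by (simp add: sin_coeff_def numeral_3_eq_3 fact_numeral power3_eq_cube)
  then have s: "h/2 - (h/2)^3/6 \<le> sin (h/2)"
    by (simp only: abs_le_iff) linarith
  have nn: "0 \<le> h/2 - (h/2)^3/6"
  proof -
    have "(h/2)^3 \<le> (h/2)^1" using assms by (intro power_decreasing) auto
    then have "(h/2)^3 \<le> h/2" by simp
    then show ?thesis using assms by linarith
  qed
  have "(h/2 - (h/2)^3/6)^2 \<le> (sin (h/2))^2"
    using s nn by (intro power_mono) auto
  moreover have "1 - cos h = 2 * (sin (h/2))^2"
    using cos_double_sin[of "h/2"] by simp
  moreover have "h^2/2 - h^4/24 \<le> 2 * (h/2 - (h/2)^3/6)^2"
  proof -
    have "2 * (h/2 - (h/2)^3/6)^2 = h^2/2 - h^4/24 + h^6/1152"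
      by (simp add: power2_eq_square field_simps) (simp add: algebra_simps power_def)
    moreover have "0 \<le> h^6" using assms by simp
    ultimately show ?thesis by linarith
  qed
  ultimately show ?thesis by linarith
qed

lemma small_powers_sum_le_cube:
  fixes e E :: real
  assumes "\<bar>e\<bar> \<le> E" "E \<le> 1"
  shows "e^3/3 + e^4/6 + e^5/3 \<le> E^3"
proof -
  have power_le: "e^k \<le> E^3" if "3 \<le> k" for k
  proof -
    have "e^k \<le> \<bar>e\<bar>^k" by (metis abs_ge_self power_abs)
    also have "\<dots> \<le> E^k" using assms(1) by (intro power_mono) auto
    also have "\<dots> \<le> E^3" using assms that by (intro power_decreasing) auto
    finally show ?thesis .
  qed
  have "0 \<le> E^3" using assms by simp
  then show ?thesis using power_le[of 3] power_le[of 4] power_le[of 5] by linarith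
qed

lemma sq_mult_ln_sq_ratio_le:
  fixes x y E :: real
  assumes "x > 0" "y > 0" "\<bar>x - y\<bar> \<le> E * y" "E \<le> 1"
  shows "x^2 * (ln (x^2) - ln (y^2)) \<le> 2 * (x*y - y^2) + 3 * (x - y)^2 + 2 * y^2 * E^3"
proof -
  define e where "e = x / y - 1"
  have xe: "x = y * (1 + e)" using assms by (simp add: e_def field_simps)
  have ee: "\<bar>e\<bar> \<le> E"
  proof -
    have "\<bar>e\<bar> = \<bar>x - y\<bar> / y" using assms by (simp add: e_def field_simps abs_div)
    also have "\<dots> \<le> E" using assms by (simp add: divide_le_eq)
    finally show ?thesis .
  qed
  have e1: "1 + e > 0" using assms by (simp add: e_def)
  have "ln (x^2) = ln (y^2) + ln ((1+e)^2)"
    unfolding xe power_mult_distrib using assms e1 by (simp add: ln_mult)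
  moreover have "ln ((1+e)^2) = 2 * ln (1 + e)" using e1 by (simp add: ln_realpow)
  ultimately have "ln (x^2) - ln (y^2) = 2 * ln (1 + e)" by simp
  moreover have "ln (1 + e) \<le> e - e^2/2 + e^3/3"
    using ln_le_cubic_taylor[of "1+e"] assms xe by (simp add: zero_less_mult_iff)
  ultimately have "x^2 * (ln (x^2) - ln (y^2)) \<le> x^2 * (2 * (e - e^2/2 + e^3/3))"
    by (intro mult_left_mono) auto
  also have "\<dots> = 2 * y^2 * (e + 3/2 * e^2) + 2 * y^2 * (e^3/3 + e^4/6 + e^5/3)"
    unfolding xe by (simp add: algebra_simps power2_eq_square power3_eq_cube power4_eq_xxxx power_def)
  also have "\<dots> \<le> 2 * y^2 * (e + 3/2 * e^2) + 2 * y^2 * E^3"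
    using small_powers_sum_le_cube[OF ee assms(4)] by (intro add_left_mono mult_left_mono) auto
  also have "2 * y^2 * (e + 3/2 * e^2) = 2 * (x*y - y^2) + 3 * (x - y)^2"
    unfolding xe by (simp add: algebra_simps power2_eq_square)
  finally show ?thesis .
qed

lemma shifted_cubic_ge:
  fixes e \<delta> E z :: real
  assumes "z = e + \<delta>" "\<bar>e\<bar> \<le> E" "0 \<le> \<delta>"
  shows "2*z + z^2 + 2/3 * z^3 - (1 + e)^2 \<ge> -1 + 2*\<delta> - 2*E*\<delta> - 2/3*(E + \<delta>)^3"
proof -
  have "\<bar>z\<bar> \<le> E + \<delta>" using assms by linarith
  then have "\<bar>z\<bar>^3 \<le> (E + \<delta>)^3" by (intro power_mono) auto
  moreover have "- (\<bar>z\<bar>^3) \<le> z^3"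
    by (metis abs_ge_minus_self power_abs minus_le_iff)
  moreover have "-(E*\<delta>) \<le> e * \<delta>"
  proof -
    have "\<bar>e * \<delta>\<bar> \<le> E * \<delta>" using assms by (simp add: abs_mult mult_right_mono)
    then show ?thesis by linarith
  qed
  moreover have "2*z + z^2 + 2/3 * z^3 - (1 + e)^2 = -1 + 2*\<delta> + 2*e*\<delta> + \<delta>^2 + 2/3 * z^3"
    using assms(1) by (simp add: algebra_simps power2_eq_square)
  moreover have "0 \<le> \<delta>^2" by simp
  ultimately show ?thesis by linarith
qed

lemma ln_sq_ratio_sub_sq_ratio_ge:
  fixes a b c k E :: real
  assumes "a > 0" "b > 0" "c > 0" "a + c = 2 * k * b" "\<bar>a / b - 1\<bar> \<le> E" "k \<le> 1"
  shows "ln (b^2 / c^2) - a^2 / b^2 \<ge> -1 + 2*(2-2*k) - 2*E*(2-2*k) - 2/3*(E + (2-2*k))^3"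
proof -
  define y where "y = c / b"
  define e where "e = a / b - 1"
  define z where "z = e + (2 - 2*k)"
  have y: "y = 1 - z"
  proof -
    have "c = 2 * k * b - a" using assms by linarith
    then show ?thesis using assms by (simp add: y_def z_def e_def field_simps)
  qed
  have ypos: "y > 0" using assms by (simp add: y_def)
  have "ln (b^2 / c^2) = - 2 * ln y"
    using assms by (simp add: y_def ln_div ln_realpow)
  moreover have "ln y \<le> (y-1) - (y-1)^2/2 + (y-1)^3/3" by (rule ln_le_cubic_taylor[OF ypos])
  moreover have "a^2 / b^2 = (1 + e)^2" using assms by (simp add: e_def power_divide)
  ultimately have "ln (b^2 / c^2) - a^2 / b^2 \<ge> 2*z + z^2 + 2/3 * z^3 - (1 + e)^2"
    unfolding y by (simp add: algebra_simps power2_eq_square power3_eq_cube)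
  moreover have "2*z + z^2 + 2/3 * z^3 - (1 + e)^2 \<ge> -1 + 2*(2-2*k) - 2*E*(2-2*k) - 2/3*(E + (2-2*k))^3"
    by (rule shifted_cubic_ge) (use assms in \<open>auto simp: z_def e_def\<close>)
  ultimately show ?thesis by linarith
qed

lemma mult_ln_ratio_ge_variational:
  fixes p q r :: real
  assumes "p > 0" "q > 0" "r > 0"
  shows "p * (ln p - ln q) \<ge> p * ln r + p - r * q"
proof -
  have "ln (r * q / p) \<le> r * q / p - 1" by (rule ln_le_minus_one) (use assms in simp)
  then have "ln r + ln q - ln p \<le> r * q / p - 1" using assms by (simp add: ln_mult ln_div)
  then have "p * (ln r + ln q - ln p) \<le> p * (r * q / p - 1)" using assms by (intro mult_left_mono) auto
  then show ?thesis using assms by (simp add: algebra_simps)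
qed

section \<open>Chains on a great circle\<close>

definition great_circle_chain :: "nat \<Rightarrow> nat \<Rightarrow> real \<Rightarrow> (nat \<Rightarrow> nat \<Rightarrow> real) \<Rightarrow> bool" where
  "great_circle_chain d N h X \<longleftrightarrow>
     (\<forall>n\<le>N. (\<Sum>i<d. (X n i)^2) = 1) \<and>
     (\<forall>n<N. (\<Sum>i<d. X n i * X (Suc n) i) = cos h) \<and>
     (\<forall>n i. Suc n < N \<longrightarrow> i < d \<longrightarrow> X n i + X (Suc (Suc n)) i = 2 * cos h * X (Suc n) i)"

lemma great_circle_chain_step_abs_le:
  assumes "great_circle_chain d N h X" "n < N" "i < d"
  shows "\<bar>X n i - X (Suc n) i\<bar> \<le> \<bar>h\<bar>"
proof -
  have "(X n i - X (Suc n) i)^2 \<le> (\<Sum>j<d. (X n j - X (Suc n) j)^2)"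
    using assms(3) by (intro member_le_sum) auto
  also have "\<dots> = (\<Sum>j<d. (X n j)^2) - 2 * (\<Sum>j<d. X n j * X (Suc n) j) + (\<Sum>j<d. (X (Suc n) j)^2)"
    by (simp add: power2_diff sum.distrib sum_subtractf sum_distrib_left algebra_simps)
  also have "\<dots> = 2 * (1 - cos h)"
    using assms(1,2) by (simp add: great_circle_chain_def)
  also have "\<dots> \<le> h^2" using one_minus_cos_le_half_sq[of h] by simp
  finally show ?thesis using abs_le_square_iff by blast
qed

lemma rel_entropy_great_circle_chain_le:
  assumes X: "great_circle_chain d N h X" "\<forall>n\<le>N. \<forall>i<d. m \<le> X n i"
    and m: "m > 0" and h: "0 \<le> h" "h \<le> m"
  shows "(\<Sum>n<N. rel_entropy d (\<lambda>i. (X n i)^2) (\<lambda>i. (X (Suc n) i)^2)) \<le> real N * (2*h^2 + 2*(h/m)^3)"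
proof -
  define E where "E = h / m"
  have E: "0 \<le> E" "E \<le> 1" using m h by (auto simp: E_def)
  have step: "rel_entropy d (\<lambda>i. (X n i)^2) (\<lambda>i. (X (Suc n) i)^2) \<le> 2*h^2 + 2*E^3"
    if n: "n < N" for n
  proof -
    have "rel_entropy d (\<lambda>i. (X n i)^2) (\<lambda>i. (X (Suc n) i)^2) \<le>
        (\<Sum>i<d. 2 * (X n i * X (Suc n) i - (X (Suc n) i)^2) + 3 * (X n i - X (Suc n) i)^2
               + 2 * (X (Suc n) i)^2 * E^3)"
      unfolding rel_entropy_def
    proof (intro sum_mono sq_mult_ln_sq_ratio_le)
      fix i assume i: "i \<in> {..<d}"
      show "X n i > 0" "X (Suc n) i > 0"
        using X(2) m n i by (auto intro: less_le_trans)
      have "\<bar>X n i - X (Suc n) i\<bar> \<le> E * m"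
        using great_circle_chain_step_abs_le[OF X(1) n] i m h by (simp add: E_def)
      also have "\<dots> \<le> E * X (Suc n) i" using X(2) n i E by (intro mult_left_mono) auto
      finally show "\<bar>X n i - X (Suc n) i\<bar> \<le> E * X (Suc n) i" .
    qed (use E in simp)
    also have "\<dots> = (\<Sum>i<d. (-4) * (X n i * X (Suc n) i) + 3 * (X n i)^2 + (1 + 2*E^3) * (X (Suc n) i)^2)"
      by (intro sum.cong) (simp_all add: algebra_simps power2_eq_square)
    also have "\<dots> = (-4) * (\<Sum>i<d. X n i * X (Suc n) i) + 3 * (\<Sum>i<d. (X n i)^2)
                     + (1 + 2*E^3) * (\<Sum>i<d. (X (Suc n) i)^2)"
      by (simp only: sum.distrib sum_distrib_left)
    also have "\<dots> = 4 * (1 - cos h) + 2 * E^3"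
      using X(1) n by (simp add: great_circle_chain_def algebra_simps)
    also have "\<dots> \<le> 2*h^2 + 2*E^3" using one_minus_cos_le_half_sq[of h] by simp
    finally show ?thesis .
  qed
  have "(\<Sum>n<N. rel_entropy d (\<lambda>i. (X n i)^2) (\<lambda>i. (X (Suc n) i)^2)) \<le> (\<Sum>n<N. 2*h^2 + 2*E^3)"
    by (intro sum_mono step) auto
  then show ?thesis by (simp add: E_def)
qed

text \<open>Gibbs' variational bound D(p || q) \<ge> sum p ln r + 1 - sum r q, with a separate
  trial weight r n for each step.\<close>
lemma sum_rel_entropy_ge_telescoping:
  fixes q r :: "nat \<Rightarrow> nat \<Rightarrow> real"
  assumes q: "\<forall>n\<le>Suc M. \<forall>i<d. q n i > 0" "\<forall>n\<le>Suc M. (\<Sum>i<d. q n i) = 1"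
    and r: "\<forall>n\<le>M. \<forall>i<d. r n i > 0"
  shows "(\<Sum>n<Suc M. rel_entropy d (q n) (q (Suc n))) \<ge>
     real (Suc M) + (\<Sum>i<d. q 0 i * ln (r 0 i)) - (\<Sum>i<d. r M i * q (Suc M) i)
     + (\<Sum>n<M. \<Sum>i<d. q (Suc n) i * (ln (r (Suc n) i) - r n i))"
proof -
  define A where "A n = (\<Sum>i<d. q n i * ln (r n i))" for n
  define B where "B n = (\<Sum>i<d. r n i * q (Suc n) i)" for n
  have "rel_entropy d (q n) (q (Suc n)) \<ge> A n + 1 - B n" if n: "n < Suc M" for n
  proof -
    have "A n + 1 - B n = (\<Sum>i<d. q n i * ln (r n i) + q n i - r n i * q (Suc n) i)"
      using q(2) n by (simp add: A_def B_def sum.distrib sum_subtractf)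
    also have "\<dots> \<le> rel_entropy d (q n) (q (Suc n))"
      unfolding rel_entropy_def
      by (intro sum_mono mult_ln_ratio_ge_variational) (use q r n in auto)
    finally show ?thesis .
  qed
  then have "(\<Sum>n<Suc M. rel_entropy d (q n) (q (Suc n))) \<ge> (\<Sum>n<Suc M. A n + 1 - B n)"
    by (intro sum_mono) auto
  also have "(\<Sum>n<Suc M. A n + 1 - B n) = real (Suc M) + A 0 - B M + (\<Sum>n<M. A (Suc n) - B n)"
    using sum.lessThan_Suc_shift[of A M] by (simp add: sum.distrib sum_subtractf)
  also have "(\<Sum>n<M. A (Suc n) - B n) = (\<Sum>n<M. \<Sum>i<d. q (Suc n) i * (ln (r (Suc n) i) - r n i))"
    by (simp add: A_def B_def sum_subtractf algebra_simps)
  finally show ?thesis by (simp add: A_def B_def)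
qed

lemma great_circle_chain_ln_ratio_ge:
  assumes X: "great_circle_chain d N h X" "\<forall>n\<le>N. \<forall>i<d. m \<le> X n i" and m: "m > 0"
    and n: "Suc (Suc n) \<le> N" and i: "i < d"
  shows "ln ((X (Suc n) i)^2 / (X (Suc (Suc n)) i)^2) - (X n i)^2 / (X (Suc n) i)^2
         \<ge> -1 + 2*(2-2*cos h) - 2*(\<bar>h\<bar>/m)*(2-2*cos h) - 2/3*(\<bar>h\<bar>/m + (2-2*cos h))^3"
proof (rule ln_sq_ratio_sub_sq_ratio_ge)
  have pos: "X k i > 0" if "k \<le> N" for k
    using X(2) m that i by force
  then show "X n i > 0" "X (Suc n) i > 0" "X (Suc (Suc n)) i > 0" using n by auto
  show "X n i + X (Suc (Suc n)) i = 2 * cos h * X (Suc n) i"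
    using X(1) n i by (simp add: great_circle_chain_def)
  have "\<bar>X n i / X (Suc n) i - 1\<bar> = \<bar>X n i - X (Suc n) i\<bar> / X (Suc n) i"
    using pos[of "Suc n"] n by (simp add: field_simps abs_div)
  also have "\<dots> \<le> \<bar>h\<bar> / m"
    using great_circle_chain_step_abs_le[OF X(1), of n i] pos[of "Suc n"] X(2) n i m
    by (intro frac_le) auto
  finally show "\<bar>X n i / X (Suc n) i - 1\<bar> \<le> \<bar>h\<bar> / m" .
qed simp

text \<open>The trial weights of the variational bound are the ratios of consecutive squared
  entries of a great circle chain; its three-term recurrence makes the regrouped terms
  uniformly small.\<close>
lemma rel_entropy_chain_ge:
  fixes q :: "nat \<Rightarrow> nat \<Rightarrow> real"
  assumes X: "great_circle_chain d (Suc M) h X" "\<forall>n\<le>Suc M. \<forall>i<d. m \<le> X n i" and m: "m > 0"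
    and q: "\<forall>n\<le>Suc M. \<forall>i<d. q n i > 0" "\<forall>n\<le>Suc M. (\<Sum>i<d. q n i) = 1"
    and ends: "\<forall>i<d. q 0 i = (X 0 i)^2" "\<forall>i<d. q (Suc M) i = (X (Suc M) i)^2"
  shows "(\<Sum>n<Suc M. rel_entropy d (q n) (q (Suc n))) \<ge>
     real M * (2*(2-2*cos h) - 2*(\<bar>h\<bar>/m)*(2-2*cos h) - 2/3*(\<bar>h\<bar>/m + (2-2*cos h))^3)"
proof -
  define r where "r n i = (X n i)^2 / (X (Suc n) i)^2" for n i
  define LB where "LB = -1 + 2*(2-2*cos h) - 2*(\<bar>h\<bar>/m)*(2-2*cos h) - 2/3*(\<bar>h\<bar>/m + (2-2*cos h))^3"
  have pos: "X n i > 0" if "n \<le> Suc M" "i < d" for n i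
    using X(2) m that by force
  have first: "(\<Sum>i<d. q 0 i * ln (r 0 i)) \<ge> 0"
  proof -
    have "(\<Sum>i<d. (X 0 i)^2) = (\<Sum>i<d. (X 1 i)^2)"
      using X(1) by (simp add: great_circle_chain_def)
    then have "(\<Sum>i<d. (X 0 i)^2 * ln ((X 0 i)^2 / (X 1 i)^2)) \<ge> 0"
      using pos[of 0] pos[of 1] by (intro sum_mult_ln_ratio_nonneg) force+
    then show ?thesis using ends(1) by (simp add: r_def)
  qed
  have last: "(\<Sum>i<d. r M i * q (Suc M) i) = 1"
  proof -
    have "(\<Sum>i<d. r M i * q (Suc M) i) = (\<Sum>i<d. (X M i)^2)"
      using ends(2) pos[of "Suc M"] by (intro sum.cong) (auto simp: r_def less_le)
    then show ?thesis using X(1) by (simp add: great_circle_chain_def)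
  qed
  have middle: "(\<Sum>i<d. q (Suc n) i * (ln (r (Suc n) i) - r n i)) \<ge> LB" if n: "n < M" for n
  proof -
    have "(\<Sum>i<d. q (Suc n) i * LB) \<le> (\<Sum>i<d. q (Suc n) i * (ln (r (Suc n) i) - r n i))"
      using great_circle_chain_ln_ratio_ge[OF X m, of n] q(1) n unfolding r_def LB_def
      by (intro sum_mono mult_left_mono) (simp_all add: less_imp_le)
    moreover have "(\<Sum>i<d. q (Suc n) i * LB) = LB"
      using q(2) n by (simp add: sum_distrib_right[symmetric])
    ultimately show ?thesis by simp
  qed
  have r_pos: "\<forall>n\<le>M. \<forall>i<d. r n i > 0"
  proof (intro allI impI)
    fix n i assume "n \<le> M" "i < d"
    then show "r n i > 0" using pos[of n i] pos[of "Suc n" i] by (simp add: r_def)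
  qed
  have "(\<Sum>n<Suc M. rel_entropy d (q n) (q (Suc n))) \<ge>
      real (Suc M) + (\<Sum>i<d. q 0 i * ln (r 0 i)) - (\<Sum>i<d. r M i * q (Suc M) i)
      + (\<Sum>n<M. \<Sum>i<d. q (Suc n) i * (ln (r (Suc n) i) - r n i))"
    by (rule sum_rel_entropy_ge_telescoping[OF q r_pos])
  moreover have "(\<Sum>n<M. \<Sum>i<d. q (Suc n) i * (ln (r (Suc n) i) - r n i)) \<ge> real M * LB"
    using sum_mono[of "{..<M}" "\<lambda>_. LB"] middle by simp
  ultimately show ?thesis using first last by (simp add: LB_def algebra_simps)
qed

lemma great_circle_chain_rotation:
  assumes u: "(\<Sum>i<d. (u i)^2) = 1" and w: "(\<Sum>i<d. (w i)^2) = 1" "(\<Sum>i<d. u i * w i) = 0"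
  shows "great_circle_chain d N h (\<lambda>n i. cos (n * h) * u i + sin (n * h) * w i)"
proof -
  define X where "X n i = cos (n * h) * u i + sin (n * h) * w i" for n :: nat and i
  have inner: "(\<Sum>i<d. X n i * X n' i) = cos (n * h - n' * h)" for n n'
  proof -
    have "(\<Sum>i<d. X n i * X n' i) = cos (n * h) * cos (n' * h) * (\<Sum>i<d. (u i)^2)
       + (cos (n * h) * sin (n' * h) + sin (n * h) * cos (n' * h)) * (\<Sum>i<d. u i * w i)
       + sin (n * h) * sin (n' * h) * (\<Sum>i<d. (w i)^2)"
      by (simp add: X_def sum.distrib sum_distrib_left algebra_simps power2_eq_square)
    then show ?thesis using u w by (simp add: cos_diff)
  qed
  have "X n i + X (Suc (Suc n)) i = 2 * cos h * X (Suc n) i" for n i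
  proof -
    have sum_formulas: "cos (a - h) + cos (a + h) = 2 * cos h * cos a"
      "sin (a - h) + sin (a + h) = 2 * cos h * sin a" for a
      by (simp_all add: cos_add cos_diff sin_add sin_diff)
    have "X n i + X (Suc (Suc n)) i
        = (cos (Suc n * h - h) + cos (Suc n * h + h)) * u i + (sin (Suc n * h - h) + sin (Suc n * h + h)) * w i"
      by (simp add: X_def algebra_simps)
    also have "\<dots> = 2 * cos h * X (Suc n) i"
      unfolding sum_formulas X_def by (simp add: algebra_simps)
    finally show ?thesis .
  qed
  moreover have "(\<Sum>i<d. X n i * X (Suc n) i) = cos h" for n
    using inner[of n "Suc n"] by (simp add: algebra_simps)
  moreover have "(\<Sum>i<d. (X n i)^2) = 1" for n
    using inner[of n n] by (simp add: power2_eq_square)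
  ultimately show ?thesis unfolding great_circle_chain_def X_def[symmetric] by blast
qed

lemma inner_pos_unit_vectors_bounds:
  fixes u v :: "nat \<Rightarrow> real"
  assumes "d \<ge> 1" "\<forall>i<d. u i > 0 \<and> v i > 0" "(\<Sum>i<d. (u i)^2) = 1" "(\<Sum>i<d. (v i)^2) = 1"
  shows "0 < (\<Sum>i<d. u i * v i)" "(\<Sum>i<d. u i * v i) \<le> 1"
proof -
  show "0 < (\<Sum>i<d. u i * v i)" using assms(1,2) by (intro sum_pos) (auto simp: lessThan_empty_iff)
  have "(\<Sum>i<d. u i * v i) \<le> (\<Sum>i<d. ((u i)^2 + (v i)^2) / 2)"
  proof (rule sum_mono)
    fix i show "u i * v i \<le> ((u i)^2 + (v i)^2) / 2"
      using sum_squares_bound[of "u i" "v i"] by (simp add: power2_eq_square)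
  qed
  also have "\<dots> = 1" using assms(3,4) by (simp add: sum_divide_distrib[symmetric] sum.distrib)
  finally show "(\<Sum>i<d. u i * v i) \<le> 1" .
qed

lemma sum_sq_diff_eq_two_sub_two_inner:
  fixes u v :: "nat \<Rightarrow> real"
  assumes "(\<Sum>i<d. (u i)^2) = 1" "(\<Sum>i<d. (v i)^2) = 1"
  shows "(\<Sum>i<d. (u i - v i)^2) = 2 - 2 * (\<Sum>i<d. u i * v i)"
  using assms by (simp add: power2_diff sum.distrib sum_subtractf sum_distrib_left mult.assoc)

lemma orthonormal_complement:
  fixes u v :: "nat \<Rightarrow> real" and s :: real
  assumes nu: "(\<Sum>i<d. (u i)^2) = 1" and nv: "(\<Sum>i<d. (v i)^2) = 1"
  defines "c \<equiv> \<Sum>i<d. u i * v i"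
  assumes s: "s > 0" "s^2 = 1 - c^2"
  defines "w \<equiv> \<lambda>i. (v i - c * u i) / s"
  shows "(\<Sum>i<d. u i * w i) = 0" "(\<Sum>i<d. (w i)^2) = 1"
proof -
  have "(\<Sum>i<d. u i * w i) = ((\<Sum>i<d. u i * v i) - c * (\<Sum>i<d. (u i)^2)) / s"
    by (simp add: w_def sum_divide_distrib[symmetric] sum_subtractf sum_distrib_left
        algebra_simps power2_eq_square)
  then show "(\<Sum>i<d. u i * w i) = 0" using nu by (simp add: c_def)
  have "(\<Sum>i<d. (w i)^2)
      = ((\<Sum>i<d. (v i)^2) - 2 * c * (\<Sum>i<d. u i * v i) + c^2 * (\<Sum>i<d. (u i)^2)) / s^2"
    by (simp add: w_def power_divide sum_divide_distrib[symmetric] sum_subtractf sum.distrib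
        sum_distrib_left power2_diff algebra_simps power_mult_distrib)
  also have "\<dots> = (1 - c^2) / s^2" using nu nv by (simp add: c_def power2_eq_square)
  also have "\<dots> = 1" using s by (simp flip: s(2))
  finally show "(\<Sum>i<d. (w i)^2) = 1" .
qed

lemma sin_le_sin_diff_add_sin:
  fixes t s :: real
  assumes "0 \<le> s" "s \<le> t" "t \<le> pi"
  shows "sin t \<le> sin (t - s) + sin s"
proof -
  have "sin t = sin (t - s) * cos s + cos (t - s) * sin s"
    using sin_add[of "t - s" s] by simp
  also have "\<dots> \<le> sin (t - s) * 1 + 1 * sin s"
    using assms by (intro add_mono mult_left_mono mult_right_mono) (auto intro: sin_ge_zero)
  finally show ?thesis by simp
qed

lemma slerp_ge:
  fixes a b m t \<theta> :: real
  assumes "0 \<le> t" "t \<le> \<theta>" "\<theta> \<le> pi" "sin \<theta> > 0" "0 \<le> m" "m \<le> a" "m \<le> b"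
  shows "m \<le> (sin (\<theta> - t) * a + sin t * b) / sin \<theta>"
proof -
  have "m * sin \<theta> \<le> m * sin (\<theta> - t) + m * sin t"
    using assms sin_le_sin_diff_add_sin[of t \<theta>] by (simp flip: distrib_left add: mult_left_mono)
  also have "\<dots> \<le> sin (\<theta> - t) * a + sin t * b"
    using assms by (intro add_mono) (simp_all add: mult.commute mult_right_mono sin_ge_zero)
  finally show ?thesis using assms(4) by (simp add: pos_le_divide_eq)
qed

lemma slerp_mono:
  fixes a b a' b' t \<theta> :: real
  assumes "0 \<le> t" "t \<le> \<theta>" "\<theta> \<le> pi" "sin \<theta> > 0" "a' \<le> a" "b' \<le> b"
  shows "(sin (\<theta> - t) * a' + sin t * b') / sin \<theta> \<le> (sin (\<theta> - t) * a + sin t * b) / sin \<theta>"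
  using assms by (intro divide_right_mono add_mono mult_left_mono) (simp_all add: sin_ge_zero)

lemma great_circle_chain_exists:
  fixes u v :: "nat \<Rightarrow> real"
  assumes d: "d \<ge> 1" and pos: "\<forall>i<d. u i > 0 \<and> v i > 0"
    and nu: "(\<Sum>i<d. (u i)^2) = 1" and nv: "(\<Sum>i<d. (v i)^2) = 1"
    and mono: "\<forall>i j. i \<le> j \<longrightarrow> j < d \<longrightarrow> u j \<le> u i \<and> v j \<le> v i"
    and N: "N \<ge> 1" and m: "m \<ge> 0" "\<forall>i<d. m \<le> u i \<and> m \<le> v i"
  shows "\<exists>X. great_circle_chain d N (arccos (\<Sum>i<d. u i * v i) / N) X
      \<and> (\<forall>i<d. X 0 i = u i \<and> X N i = v i)
      \<and> (\<forall>n\<le>N. \<forall>i<d. m \<le> X n i)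
      \<and> (\<forall>n\<le>N. \<forall>i j. i \<le> j \<longrightarrow> j < d \<longrightarrow> X n j \<le> X n i)"
proof -
  define c where "c = (\<Sum>i<d. u i * v i)"
  define \<theta> where "\<theta> = arccos c"
  define h where "h = \<theta> / N"
  have c: "0 < c" "c \<le> 1" using inner_pos_unit_vectors_bounds[OF d pos nu nv] by (simp_all add: c_def)
  show ?thesis
  proof (cases "c = 1")
    case True
    have "(\<Sum>i<d. (u i - v i)^2) = 0"
      using sum_sq_diff_eq_two_sub_two_inner[OF nu nv] True by (simp add: c_def)
    then have "\<forall>i<d. u i = v i" by (subst (asm) sum_nonneg_eq_0_iff) auto
    moreover have "great_circle_chain d N 0 (\<lambda>n. u)"
      using nu by (simp add: great_circle_chain_def power2_eq_square)
    ultimately show ?thesis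
      using True m mono by (intro exI[of _ "\<lambda>n. u"]) (simp add: c_def)
  next
    case False
    have \<theta>: "0 < \<theta>" "\<theta> \<le> pi / 2"
      using c False arccos_lt_bounded[of c] arccos_le_pi2[of c] by (auto simp: \<theta>_def)
    have sin\<theta>: "sin \<theta> > 0" using \<theta> by (intro sin_gt_zero) auto
    have cos\<theta>: "cos \<theta> = c" using c by (simp add: \<theta>_def)
    define w where "w i = (v i - c * u i) / sin \<theta>" for i
    have w: "(\<Sum>i<d. u i * w i) = 0" "(\<Sum>i<d. (w i)^2) = 1"
      using orthonormal_complement[OF nu nv sin\<theta>] cos\<theta>
      by (simp_all add: w_def c_def sin_squared_eq)
    define X where "X n i = cos (n * h) * u i + sin (n * h) * w i" for n :: nat and i
    have X_slerp: "X n i = (sin (\<theta> - n * h) * u i + sin (n * h) * v i) / sin \<theta>" for n i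
      using sin\<theta> by (simp add: X_def w_def field_simps sin_diff cos\<theta>)
    have angle: "0 \<le> n * h" "n * h \<le> \<theta>" "\<theta> \<le> pi" if "n \<le> N" for n
      using that \<theta> N by (auto simp: h_def field_simps mult_left_mono)
    have "great_circle_chain d N h X"
      unfolding X_def by (rule great_circle_chain_rotation[OF nu w(2,1)])
    moreover have "X 0 i = u i \<and> X N i = v i" for i
      using sin\<theta> N by (simp add: X_slerp h_def)
    moreover have "m \<le> X n i" if "n \<le> N" "i < d" for n i
      unfolding X_slerp using angle[of n] sin\<theta> m that by (intro slerp_ge) auto
    moreover have "X n j \<le> X n i" if "n \<le> N" "i \<le> j" "j < d" for n i j
      unfolding X_slerp using angle[of n] sin\<theta> mono that by (intro slerp_mono) auto
    ultimately show ?thesis unfolding h_def \<theta>_def c_def by blast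
  qed
qed

section \<open>Asymptotics of the minimal cost\<close>

lemma chain_bound_ge_two_sq_sub_cube:
  fixes h m :: real
  assumes "0 \<le> h" "h \<le> 1" "m > 0"
  shows "2*(2-2*cos h) - 2*(\<bar>h\<bar>/m)*(2-2*cos h) - 2/3*(\<bar>h\<bar>/m + (2-2*cos h))^3
         \<ge> 2*h^2 - (1/6 + 2/m + 2/3*(1/m+1)^3) * h^3"
proof -
  define \<delta> where "\<delta> = 2 - 2*cos h"
  have \<delta>_le: "\<delta> \<le> h^2" using one_minus_cos_le_half_sq[of h] by (simp add: \<delta>_def)
  have \<delta>_ge: "h^2 - h^4/12 \<le> \<delta>" using one_minus_cos_ge_taylor[of h] assms by (simp add: \<delta>_def)
  have \<delta>_nonneg: "0 \<le> \<delta>" using cos_le_one[of h] by (simp add: \<delta>_def)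
  have "h^4 \<le> h^3" using assms by (intro power_decreasing) auto
  then have t1: "2*\<delta> \<ge> 2*h^2 - h^3/6" using \<delta>_ge by linarith
  have "2*(h/m)*\<delta> \<le> 2*(h/m)*h^2" using \<delta>_le assms by (intro mult_left_mono) auto
  then have t2: "2*(h/m)*\<delta> \<le> (2/m) * h^3" by (simp add: power2_eq_square power3_eq_cube)
  have t3: "(h/m + \<delta>)^3 \<le> (1/m+1)^3 * h^3"
  proof -
    have "h^2 \<le> h" using assms by (simp add: power2_eq_square mult_left_le_one_le)
    then have "h/m + \<delta> \<le> h * (1/m + 1)" using \<delta>_le by (simp add: algebra_simps)
    then have "(h/m + \<delta>)^3 \<le> (h * (1/m + 1))^3" using \<delta>_nonneg assms by (intro power_mono) auto
    then show ?thesis by (simp add: power_mult_distrib mult.commute)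
  qed
  show ?thesis using t1 t2 t3 assms unfolding \<delta>_def[symmetric] by (simp add: algebra_simps)
qed

lemma pred_mult_step_bound_ge:
  fixes \<theta> K :: real
  assumes "N = Suc M" "K \<ge> 0" "\<theta> \<ge> 0"
  shows "real M * (2*(\<theta>/N)^2 - K*(\<theta>/N)^3) \<ge> 2*\<theta>^2/N - (2*\<theta>^2 + K*\<theta>^3)/(real N)^2"
proof -
  have "real M * (K*(\<theta>/N)^3) \<le> real N * (K*(\<theta>/N)^3)"
    using assms by (intro mult_right_mono) auto
  moreover have "real M * (2*(\<theta>/N)^2) = 2*\<theta>^2/N - 2*\<theta>^2/(real N)^2"
  proof -
    have M_eq: "real M = real N - 1" using assms(1) by simp
    have "real N > 0" using assms(1) by simp
    then show ?thesis unfolding M_eq by (simp add: field_simps power2_eq_square)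
  qed
  moreover have "real N * (K*(\<theta>/N)^3) = K*\<theta>^3/(real N)^2"
    using assms(1) by (simp add: power2_eq_square power3_eq_cube)
  ultimately show ?thesis by (simp add: algebra_simps add_divide_distrib diff_divide_distrib)
qed

lemma Lstar_eq_partition_fn:
  assumes "d \<ge> 1"
  shows "Lstar d b lam ES = 2 * arccos (partition_fn d ES (b * (1 + lam) / 2)
                                    / sqrt (partition_fn d ES b * partition_fn d ES (lam * b)))"
proof -
  have sqrt_exp: "sqrt (exp x) = exp (x / 2)" for x
    by (rule real_sqrt_unique) (simp_all add: power2_eq_square exp_add[symmetric])
  have "sqrt (thermal d b ES i) * sqrt (thermal d (lam * b) ES i)
      = exp (- (b * (1 + lam) / 2) * ES i) / sqrt (partition_fn d ES b * partition_fn d ES (lam * b))"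
    for i
  proof -
    have "exp (- b * ES i / 2) * exp (- (lam * b) * ES i / 2) = exp (- (b * (1 + lam) / 2) * ES i)"
      by (simp add: exp_add[symmetric] algebra_simps add_divide_distrib)
    then show ?thesis
      unfolding thermal_def real_sqrt_divide sqrt_exp real_sqrt_mult by simp
  qed
  then show ?thesis
    by (simp add: Lstar_def partition_fn_def sum_divide_distrib)
qed

definition chain_spectrum :: "real \<Rightarrow> (nat \<Rightarrow> nat \<Rightarrow> real) \<Rightarrow> nat \<Rightarrow> nat \<Rightarrow> real" where
  "chain_spectrum b X n i = - ln ((X n i)^2) / b"

locale cooling =
  fixes d :: nat and b lam :: real and ES :: "nat \<Rightarrow> real"
  assumes d: "d \<ge> 1" and b: "b > 0" and lam: "lam \<ge> 0" and sorted: "sorted_spec d ES"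
begin

definition root_init :: "nat \<Rightarrow> real" where
  "root_init i = sqrt (thermal d b ES i)"

definition root_final :: "nat \<Rightarrow> real" where
  "root_final i = sqrt (thermal d (lam * b) ES i)"

definition bures_angle :: real where
  "bures_angle = arccos (\<Sum>i<d. root_init i * root_final i)"

definition min_root :: real where
  "min_root = Min ((\<lambda>i. min (root_init i) (root_final i)) ` {..<d})"

definition cube_const :: real where
  "cube_const = 1/6 + 2/min_root + 2/3*(1/min_root + 1)^3"

definition remainder_const :: real where
  "remainder_const = max (2*bures_angle^3/min_root^3) (2*bures_angle^2 + cube_const*bures_angle^3)"

definition entropy_drop :: real where
  "entropy_drop = entropy d (thermal d b ES) - entropy d (thermal d (lam * b) ES)"

lemma Lstar_eq_bures_angle: "Lstar d b lam ES = 2 * bures_angle"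
  by (simp add: Lstar_def bures_angle_def root_init_def root_final_def)

lemma roots_pos: "\<forall>i<d. root_init i > 0 \<and> root_final i > 0"
  using thermal_pos[OF d] by (simp add: root_init_def root_final_def)

lemma root_sq: "(root_init i)^2 = thermal d b ES i" "(root_final i)^2 = thermal d (lam * b) ES i"
  using thermal_pos[OF d] by (simp_all add: root_init_def root_final_def less_imp_le)

lemma sum_root_sq: "(\<Sum>i<d. (root_init i)^2) = 1" "(\<Sum>i<d. (root_final i)^2) = 1"
  using sum_thermal[OF d] by (simp_all add: root_sq)

lemma roots_antimono: "\<forall>i j. i \<le> j \<longrightarrow> j < d \<longrightarrow> root_init j \<le> root_init i \<and> root_final j \<le> root_final i"
  using thermal_antimono[OF d _ sorted] b lam by (simp add: root_init_def root_final_def)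

lemma min_root_le: "\<forall>i<d. min_root \<le> root_init i \<and> min_root \<le> root_final i"
  unfolding min_root_def by (auto intro: Min.coboundedI[THEN order_trans])

lemma min_root_pos: "min_root > 0"
  unfolding min_root_def using d roots_pos by (subst Min_gr_iff) (auto simp: lessThan_empty_iff)

lemma min_root_le_one: "min_root \<le> 1"
proof -
  have "(root_init 0)^2 \<le> 1"
    using d member_le_sum[of 0 "{..<d}" "\<lambda>i. (root_init i)^2"] sum_root_sq by simp
  then have "root_init 0 \<le> 1" using roots_pos d by (simp add: abs_square_le_1)
  then show ?thesis using min_root_le d by force
qed

lemma bures_angle_nonneg: "bures_angle \<ge> 0"
  using inner_pos_unit_vectors_bounds[OF d roots_pos sum_root_sq] arccos_bounded
  by (simp add: bures_angle_def)

lemma geodesic_chain: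
  assumes "N \<ge> 1"
  obtains X where "great_circle_chain d N (bures_angle / N) X"
    "\<forall>i<d. X 0 i = root_init i \<and> X N i = root_final i"
    "\<forall>n\<le>N. \<forall>i<d. min_root \<le> X n i"
    "\<forall>n\<le>N. \<forall>i j. i \<le> j \<longrightarrow> j < d \<longrightarrow> X n j \<le> X n i"
  using great_circle_chain_exists[OF d roots_pos sum_root_sq roots_antimono assms
      less_imp_le[OF min_root_pos] min_root_le]
  unfolding bures_angle_def by blast

lemma thermal_chain_chain_spectrum:
  assumes X: "great_circle_chain d N h X" "\<forall>i<d. X 0 i = root_init i" "\<forall>n\<le>N. \<forall>i<d. X n i > 0"
    and n: "n \<le> N" and i: "i < d"
  shows "thermal_chain d b ES (chain_spectrum b X) n i = (X n i)^2"
proof (cases "n = 0")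
  case True
  then show ?thesis using X(2) i by (simp add: thermal_chain_def root_sq)
next
  case False
  have "chain_spectrum b X n = (\<lambda>i. - ln ((X n i)^2) / b)"
    by (simp add: fun_eq_iff chain_spectrum_def)
  moreover have "thermal d b (\<lambda>i. - ln ((X n i)^2) / b) i = (X n i)^2"
    using X(1,3) n i by (intro thermal_of_ln_sq[OF d b]) (auto simp: great_circle_chain_def)
  ultimately show ?thesis using False by (simp add: thermal_chain_def)
qed

lemma admissible_chain_spectrum:
  assumes X: "great_circle_chain d N h X" "\<forall>i<d. X 0 i = root_init i \<and> X N i = root_final i"
    "\<forall>n\<le>N. \<forall>i<d. X n i > 0" "\<forall>n\<le>N. \<forall>i j. i \<le> j \<longrightarrow> j < d \<longrightarrow> X n j \<le> X n i"
    and N: "N \<ge> 1"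
  shows "admissible d b lam ES N (chain_spectrum b X)"
  unfolding admissible_def
proof (intro conjI ballI allI impI)
  fix n assume n: "n \<in> {1..N}"
  show "sorted_spec d (chain_spectrum b X n)"
    unfolding sorted_spec_def
  proof (intro allI impI)
    fix i j assume ij: "i \<le> j" "j < d"
    have "0 < X n j" "X n j \<le> X n i" using X(3,4) n ij by auto
    then have "ln ((X n j)^2) \<le> ln ((X n i)^2)" by (simp add: power_mono)
    then show "chain_spectrum b X n i \<le> chain_spectrum b X n j"
      using b by (simp add: chain_spectrum_def divide_right_mono)
  qed
next
  fix i assume i: "i < d"
  have "final_S_pop d b ES (chain_spectrum b X) N i = thermal_chain d b ES (chain_spectrum b X) N i"
    using final_S_pop_eq[OF d N i] N by (simp add: thermal_chain_def)
  also have "\<dots> = (root_final i)^2"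
    using thermal_chain_chain_spectrum[OF X(1) _ X(3) order_refl i] X(2) i by simp
  finally show "final_S_pop d b ES (chain_spectrum b X) N i = thermal d (lam * b) ES i"
    by (simp add: root_sq)
qed

lemma min_cost_upper:
  assumes N: "N \<ge> 1" and small: "bures_angle / N \<le> min_root"
  shows "\<exists>EM. admissible d b lam ES N EM \<and> b * Delta_E_M d b ES EM N
           \<le> entropy_drop + 2*bures_angle^2/N + 2*bures_angle^3/min_root^3/(real N)^2"
proof -
  let ?\<theta> = bures_angle and ?m = min_root
  obtain X where X: "great_circle_chain d N (?\<theta> / N) X"
    "\<forall>i<d. X 0 i = root_init i \<and> X N i = root_final i"
    "\<forall>n\<le>N. \<forall>i<d. ?m \<le> X n i" "\<forall>n\<le>N. \<forall>i j. i \<le> j \<longrightarrow> j < d \<longrightarrow> X n j \<le> X n i"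
    using geodesic_chain[OF N] by blast
  have X_pos: "\<forall>n\<le>N. \<forall>i<d. X n i > 0" using X(3) min_root_pos by force
  have adm: "admissible d b lam ES N (chain_spectrum b X)"
    by (rule admissible_chain_spectrum[OF X(1,2) X_pos X(4) N])
  have "b * Delta_E_M d b ES (chain_spectrum b X) N
      = entropy_drop + (\<Sum>n<N. rel_entropy d (\<lambda>i. (X n i)^2) (\<lambda>i. (X (Suc n) i)^2))"
    using scaled_Delta_E_M_admissible[OF adm d N] thermal_chain_chain_spectrum[OF X(1) _ X_pos] X(2)
    by (simp add: entropy_drop_def cong: rel_entropy_cong)
  also have "\<dots> \<le> entropy_drop + real N * (2*(?\<theta>/N)^2 + 2*(?\<theta>/N/?m)^3)"
    using rel_entropy_great_circle_chain_le[OF X(1,3) min_root_pos] bures_angle_nonneg small by simp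
  also have "real N * (2*(?\<theta>/N)^2 + 2*(?\<theta>/N/?m)^3) = 2*?\<theta>^2/N + 2*?\<theta>^3/?m^3/(real N)^2"
    using N min_root_pos by (simp add: field_simps power2_eq_square power3_eq_cube)
  finally show ?thesis using adm by auto
qed

lemma admissible_cost_lower:
  assumes adm: "admissible d b lam ES N EM" and N: "N \<ge> 1" and small: "bures_angle / N \<le> min_root"
  shows "b * Delta_E_M d b ES EM N
           \<ge> entropy_drop + 2*bures_angle^2/N - (2*bures_angle^2 + cube_const*bures_angle^3)/(real N)^2"
proof -
  let ?\<theta> = bures_angle and ?m = min_root and ?K = cube_const and ?Q = "thermal_chain d b ES EM"
  define h where "h = ?\<theta> / N"
  obtain M where M: "N = Suc M" using N by (cases N) auto
  obtain X where X: "great_circle_chain d N h X"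
    "\<forall>i<d. X 0 i = root_init i \<and> X N i = root_final i" "\<forall>n\<le>N. \<forall>i<d. ?m \<le> X n i"
    using geodesic_chain[OF N, folded h_def] by metis
  have h: "0 \<le> h" "h \<le> 1" using bures_angle_nonneg small min_root_le_one by (auto simp: h_def)
  have "(\<Sum>n<N. rel_entropy d (?Q n) (?Q (Suc n))) \<ge>
      real M * (2*(2-2*cos h) - 2*(\<bar>h\<bar>/?m)*(2-2*cos h) - 2/3*(\<bar>h\<bar>/?m + (2-2*cos h))^3)"
    unfolding M
  proof (rule rel_entropy_chain_ge[OF X(1,3)[unfolded M] min_root_pos])
    show "\<forall>n\<le>Suc M. \<forall>i<d. ?Q n i > 0" "\<forall>n\<le>Suc M. (\<Sum>i<d. ?Q n i) = 1"
      using thermal_pos[OF d] sum_thermal[OF d] by (simp_all add: thermal_chain_def)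
    show "\<forall>i<d. ?Q 0 i = (X 0 i)^2" using X(2) by (simp add: thermal_chain_def root_sq)
    show "\<forall>i<d. ?Q (Suc M) i = (X (Suc M) i)^2"
      using X(2) admissible_thermal_chain_last[OF adm d N] by (simp add: M root_sq)
  qed
  also have "real M * (2*(2-2*cos h) - 2*(\<bar>h\<bar>/?m)*(2-2*cos h) - 2/3*(\<bar>h\<bar>/?m + (2-2*cos h))^3)
      \<ge> real M * (2*h^2 - ?K * h^3)"
    using chain_bound_ge_two_sq_sub_cube[OF h min_root_pos] h(1) by (intro mult_left_mono) (auto simp: cube_const_def)
  also have "real M * (2*h^2 - ?K * h^3) \<ge> 2*?\<theta>^2/N - (2*?\<theta>^2 + ?K*?\<theta>^3)/(real N)^2"
    unfolding h_def using M bures_angle_nonneg min_root_pos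
    by (intro pred_mult_step_bound_ge) (simp_all add: cube_const_def)
  finally show ?thesis
    using scaled_Delta_E_M_admissible[OF adm d N] by (simp add: entropy_drop_def)
qed

lemma min_cost_bounds:
  assumes N: "N \<ge> 1" and small: "bures_angle / N \<le> min_root"
  shows "\<bar>min_cost d b lam ES N - entropy_drop - 2*bures_angle^2/N\<bar>
           \<le> remainder_const / (real N)^2"
proof -
  let ?\<theta> = bures_angle and ?m = min_root and ?K = cube_const and ?C = remainder_const
  let ?costs = "{b * Delta_E_M d b ES EM N | EM. admissible d b lam ES N EM}"
  obtain EM where EM: "admissible d b lam ES N EM"
    "b * Delta_E_M d b ES EM N \<le> entropy_drop + 2*?\<theta>^2/N + 2*?\<theta>^3/?m^3/(real N)^2"
    using min_cost_upper[OF N small] by auto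
  have lower: "\<forall>x\<in>?costs. entropy_drop + 2*?\<theta>^2/N - (2*?\<theta>^2 + ?K*?\<theta>^3)/(real N)^2 \<le> x"
    using admissible_cost_lower[OF _ N small] by blast
  have "min_cost d b lam ES N \<le> entropy_drop + 2*?\<theta>^2/N + 2*?\<theta>^3/?m^3/(real N)^2"
    unfolding min_cost_def using EM lower by (intro cInf_lower[THEN order_trans]) (auto simp: bdd_below_def)
  moreover have "min_cost d b lam ES N \<ge> entropy_drop + 2*?\<theta>^2/N - (2*?\<theta>^2 + ?K*?\<theta>^3)/(real N)^2"
    unfolding min_cost_def using EM(1) lower by (intro cInf_greatest) auto
  moreover have "2*?\<theta>^3/?m^3/(real N)^2 \<le> ?C / (real N)^2"
    by (intro divide_right_mono) (simp_all add: remainder_const_def)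
  moreover have "(2*?\<theta>^2 + ?K*?\<theta>^3)/(real N)^2 \<le> ?C / (real N)^2"
    by (intro divide_right_mono) (simp_all add: remainder_const_def)
  ultimately show ?thesis by (simp add: abs_le_iff)
qed

lemma min_cost_expansion:
  "(\<lambda>N. min_cost d b lam ES N - entropy_drop - 2*bures_angle^2/N) \<in> O(\<lambda>N. 1 / (real N)^2)"
proof (rule bigoI)
  have "\<forall>\<^sub>F N in at_top.
      \<bar>min_cost d b lam ES N - entropy_drop - 2*bures_angle^2/N\<bar> \<le> remainder_const / (real N)^2"
    unfolding eventually_at_top_linorder
  proof (intro exI allI impI)
    fix N assume N: "N \<ge> max 1 (nat \<lceil>bures_angle / min_root\<rceil>)"
    then have "bures_angle / min_root \<le> N"
      using real_nat_ceiling_ge order_trans by fastforce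
    then have "bures_angle / N \<le> min_root" using N min_root_pos by (simp add: field_simps)
    moreover have "N \<ge> 1" using N by simp
    ultimately show "\<bar>min_cost d b lam ES N - entropy_drop - 2*bures_angle^2/N\<bar>
        \<le> remainder_const / (real N)^2"
      by (intro min_cost_bounds)
  qed
  then show "\<forall>\<^sub>F N in at_top. norm (min_cost d b lam ES N - entropy_drop - 2*bures_angle^2/N)
      \<le> remainder_const * norm (1 / (real N)^2)"
    by (rule eventually_mono) simp
qed

end

theorem theorem1:
  fixes d :: nat and b lam :: real and ES :: "nat \<Rightarrow> real"
  assumes "d \<ge> 1" and "b > 0" and "lam > 1"
    and "ES 0 = 0" and "sorted_spec d ES"
  shows "(\<lambda>N::nat. min_cost d b lam ES N
            - (entropy d (thermal d b ES) - entropy d (thermal d (lam * b) ES))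
            - (Lstar d b lam ES)^2 / (2 * real N))
           \<in> O(\<lambda>N. 1 / (real N)^2)
         \<and> Lstar d b lam ES =
             2 * arccos (partition_fn d ES (b * (1 + lam) / 2)
                         / sqrt (partition_fn d ES b * partition_fn d ES (lam * b)))"
proof
  interpret cooling d b lam ES
    using assms by unfold_locales auto
  have "(Lstar d b lam ES)^2 / (2 * real N) = 2 * bures_angle^2 / N" for N
    by (simp add: Lstar_eq_bures_angle power2_eq_square)
  then show "(\<lambda>N::nat. min_cost d b lam ES N
            - (entropy d (thermal d b ES) - entropy d (thermal d (lam * b) ES))
            - (Lstar d b lam ES)^2 / (2 * real N)) \<in> O(\<lambda>N. 1 / (real N)^2)"
    using min_cost_expansion by (simp add: entropy_drop_def)
  show "Lstar d b lam ES = 2 * arccos (partition_fn d ES (b * (1 + lam) / 2)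
                         / sqrt (partition_fn d ES b * partition_fn d ES (lam * b)))"
    by (rule Lstar_eq_partition_fn[OF assms(1)])
qed

end
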